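(* Consider the output of the Clustering procedure described in the context. Let $j' \in C$ be a client that was selected as a cluster center, and let $j \in C$ be a client with $j \in C(j')$. Then for every facility $i$ in the cluster proposition $CP(j')$ that $j'$ had at the moment it was selected as a center, $c_{ij} \le 3\, D^C_{\max}(j)$.
   Context: Metric Fault-Tolerant Facility Placement (FTFP): a finite set $F$ of facilities with opening costs $f_i\ge 0$, a finite set $C$ of clients with integer requirements $r_j\ge 1$, and connection costs $c_{ij}$ satisfying the triangle inequality (extended to a metric on $F\cup C$). A fractional solution $(\bar x,\bar y)$ assigns $\bar y_i\ge 0$ to facilities and $\bar x_{ij}\in\{0,\bar y_i\}$ to pairs (facilities may be split into co-located copies so that this holds and so that subsets of any prescribed volume below exist). For $A\subseteq F$, $\mathrm{vol}(A)=\sum_{i\in A}\bar y_i$. For a client $j$, $F_j=\{i:\bar x_{ij}>0\}$. For $A\subseteq F$ with $\mathrm{vol}(A)\ge r$, $B(j,A,r)$ denotes a subset of $A$ of volume exactly $r$ minimizing the radius $\max_{i}c_{ij}$ over the subset. The close facilities of $j$ are $F^C_j=B(j,F_j,r_j)$ and $D^C_{\max}(j)=\max_{i\in F^C_j}c_{ij}$. Clustering procedure: initially $CP(j):=F^C_j$ and $q_j:=D^C_{\max}(j)$ for all $j$ (the values $q_j$ are never changed), and every client has its requirement $r_j$ as a working value. While some client has positive working requirement: select a client $j$ with positive working requirement minimizing $q_j$ and set its working requirement to $0$; let $N(j)$ be the set of clients $j''$ with positive working requirement and $CP(j)\cap CP(j'')\neq\emptyset$; for each $j'\in N(j)$ set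 $r_{j'}:=\max(0, r_{j'}-\lceil \mathrm{vol}(CP(j)\cap CP(j'))\rceil)$ and $CP(j'):=B(j',CP(j')\setminus CP(j),r_{j'})$; then form the cluster $C(j)=\{j\}\cup N(j)\cup CP(j)$ with center $j$. *)

theory Defs
  imports Complex_Main
begin

definition vol :: "('a \<Rightarrow> real) \<Rightarrow> 'a set \<Rightarrow> real" where
  "vol y A = (\<Sum>i\<in>A. y i)"

definition radius :: "('a \<Rightarrow> 'a \<Rightarrow> real) \<Rightarrow> 'a \<Rightarrow> 'a set \<Rightarrow> real" where
  "radius d j S = (if S = {} then 0 else Max ((\<lambda>i. d i j) ` S))"

definition is_B :: "('a \<Rightarrow> 'a \<Rightarrow> real) \<Rightarrow> ('a \<Rightarrow> real) \<Rightarrow> 'a \<Rightarrow> 'a set \<Rightarrow> real \<Rightarrow> 'a set \<Rightarrow> bool" where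
  "is_B d y j A r S \<longleftrightarrow> S \<subseteq> A \<and> vol y S = r \<and>
     (\<forall>S'. S' \<subseteq> A \<longrightarrow> vol y S' = r \<longrightarrow> radius d j S \<le> radius d j S')"

text \<open>N(j): clients with positive working requirement whose current cluster proposition
  meets CP(j) (j itself excluded, its requirement having just been set to 0).\<close>
definition Nbr :: "'a set \<Rightarrow> ('a \<Rightarrow> int) \<Rightarrow> ('a \<Rightarrow> 'a set) \<Rightarrow> 'a \<Rightarrow> 'a set" where
  "Nbr C r CP j = {k \<in> C. k \<noteq> j \<and> r k > 0 \<and> CP j \<inter> CP k \<noteq> {}}"

definition cluster :: "'a set \<Rightarrow> ('a \<Rightarrow> int) \<Rightarrow> ('a \<Rightarrow> 'a set) \<Rightarrow> 'a \<Rightarrow> 'a set" where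
  "cluster C r CP j = {j} \<union> Nbr C r CP j \<union> CP j"

text \<open>One iteration of the clustering loop: from state (r, CP) the center j is selected
  (with tie-breaking and choices of B arbitrary), leading to state (r', CP').\<close>
definition clust_step ::
  "('a \<Rightarrow> 'a \<Rightarrow> real) \<Rightarrow> ('a \<Rightarrow> real) \<Rightarrow> 'a set \<Rightarrow> ('a \<Rightarrow> real)
   \<Rightarrow> ('a \<Rightarrow> int) \<Rightarrow> ('a \<Rightarrow> 'a set) \<Rightarrow> 'a \<Rightarrow> ('a \<Rightarrow> int) \<Rightarrow> ('a \<Rightarrow> 'a set) \<Rightarrow> bool" where
  "clust_step d y C q r CP j r' CP' \<longleftrightarrow>
     j \<in> C \<and> r j > 0 \<and> (\<forall>k\<in>C. r k > 0 \<longrightarrow> q j \<le> q k) \<and>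
     r' j = 0 \<and> CP' j = CP j \<and>
     (\<forall>k. k \<in> Nbr C r CP j \<longrightarrow>
        r' k = max 0 (r k - \<lceil>vol y (CP j \<inter> CP k)\<rceil>) \<and>
        is_B d y k (CP k - CP j) (of_int (r' k)) (CP' k)) \<and>
     (\<forall>k. k \<noteq> j \<longrightarrow> k \<notin> Nbr C r CP j \<longrightarrow> r' k = r k \<and> CP' k = CP k)"

definition clust_run ::
  "('a \<Rightarrow> 'a \<Rightarrow> real) \<Rightarrow> ('a \<Rightarrow> real) \<Rightarrow> 'a set \<Rightarrow> ('a \<Rightarrow> nat) \<Rightarrow> ('a \<Rightarrow> 'a set)
   \<Rightarrow> nat \<Rightarrow> (nat \<Rightarrow> 'a \<Rightarrow> int) \<Rightarrow> (nat \<Rightarrow> 'a \<Rightarrow> 'a set) \<Rightarrow> (nat \<Rightarrow> 'a) \<Rightarrow> bool" where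
  "clust_run d y C req FC n R P ctr \<longleftrightarrow>
     (\<forall>k. R 0 k = int (req k)) \<and> (\<forall>k. P 0 k = FC k) \<and>
     (\<forall>t<n. clust_step d y C (\<lambda>k. radius d k (FC k)) (R t) (P t) (ctr t) (R (Suc t)) (P (Suc t))) \<and>
     (\<forall>k\<in>C. R n k \<le> 0)"

end

theory Submission
  imports Defs
begin

text \<open>Cluster propositions only shrink, so every facility of CP(k) is within q(k) of k.
  If j lies in the cluster of the center j', either j = j', or j is a neighbour: some facility a
  lies in both CP(j') and CP(j), and the path i \<rightarrow> j' \<rightarrow> a \<rightarrow> j has length at most
  2 q(j') + q(j) \<le> 3 q(j), since j' was chosen with minimal q among the pending clients.\<close>

lemma clust_step_proposition_subset:
  assumes "clust_step d y C q r CP j r' CP'"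
  shows "CP' k \<subseteq> CP k"
proof (cases "k = j \<or> k \<notin> Nbr C r CP j")
  case True
  then show ?thesis using assms by (auto simp: clust_step_def)
next
  case False
  then have "is_B d y k (CP k - CP j) (of_int (r' k)) (CP' k)"
    using assms unfolding clust_step_def by blast
  then show ?thesis by (auto simp: is_B_def)
qed

lemma clust_run_proposition_subset:
  assumes "clust_run d y C req FC n R P ctr" and "t \<le> n"
  shows "P t k \<subseteq> FC k"
  using assms(2)
proof (induction t)
  case 0
  then show ?case using assms(1) by (simp add: clust_run_def)
next
  case (Suc t)
  then have "clust_step d y C (\<lambda>k. radius d k (FC k)) (R t) (P t) (ctr t) (R (Suc t)) (P (Suc t))"
    using assms(1) by (simp add: clust_run_def)
  then show ?case using Suc clust_step_proposition_subset by fastforce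
qed

lemma cluster_member_cases:
  assumes "j \<in> cluster C r CP j'" and "j \<notin> CP j'"
  obtains (center) "j = j'" | (neighbour) "r j > 0" and "CP j' \<inter> CP j \<noteq> {}"
  using assms by (auto simp: cluster_def Nbr_def)

lemma radius_ge:
  assumes "finite S" and "a \<in> S"
  shows "d a k \<le> radius d k S"
  using assms by (auto simp: radius_def)

lemma dist_nonneg:
  fixes d :: "'a \<Rightarrow> 'a \<Rightarrow> real"
  assumes "\<And>u. u \<in> S \<Longrightarrow> d u u = 0"
    and "\<And>u v. u \<in> S \<Longrightarrow> v \<in> S \<Longrightarrow> d u v = d v u"
    and "\<And>u v w. u \<in> S \<Longrightarrow> v \<in> S \<Longrightarrow> w \<in> S \<Longrightarrow> d u w \<le> d u v + d v w"
    and "u \<in> S" and "v \<in> S"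
  shows "d u v \<ge> 0"
proof -
  have "d u u \<le> d u v + d v u" using assms(3-5) by blast
  then show ?thesis using assms(1)[OF assms(4)] assms(2)[OF assms(4,5)] by linarith
qed

lemma dist_le_via_common_point:
  fixes d :: "'a \<Rightarrow> 'a \<Rightarrow> real"
  assumes "\<And>u v. u \<in> S \<Longrightarrow> v \<in> S \<Longrightarrow> d u v = d v u"
    and "\<And>u v w. u \<in> S \<Longrightarrow> v \<in> S \<Longrightarrow> w \<in> S \<Longrightarrow> d u w \<le> d u v + d v w"
    and "i \<in> S" "a \<in> S" "j \<in> S" "j' \<in> S"
    and "d i j' \<le> q'" "d a j' \<le> q'" "d a j \<le> q" "q' \<le> q"
  shows "d i j \<le> 3 * q"
proof -
  have "d i j \<le> d i j' + d j' j" "d j' j \<le> d j' a + d a j"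
    using assms(2) assms(3-6) by blast+
  then show ?thesis using assms(1)[OF assms(6,4)] assms(7-10) by linarith
qed

theorem lemma1:
  fixes F C :: "'a set" and d :: "'a \<Rightarrow> 'a \<Rightarrow> real"
    and y :: "'a \<Rightarrow> real" and x :: "'a \<Rightarrow> 'a \<Rightarrow> real"
    and req :: "'a \<Rightarrow> nat" and FC :: "'a \<Rightarrow> 'a set"
    and n :: nat and R :: "nat \<Rightarrow> 'a \<Rightarrow> int" and P :: "nat \<Rightarrow> 'a \<Rightarrow> 'a set"
    and ctr :: "nat \<Rightarrow> 'a" and t :: nat and j j' i :: 'a
  assumes "finite F" and "finite C" and "F \<inter> C = {}"
    and "\<And>u. u \<in> F \<union> C \<Longrightarrow> d u u = 0"
    and "\<And>u v. u \<in> F \<union> C \<Longrightarrow> v \<in> F \<union> C \<Longrightarrow> d u v = d v u"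
    and "\<And>u v w. u \<in> F \<union> C \<Longrightarrow> v \<in> F \<union> C \<Longrightarrow> w \<in> F \<union> C \<Longrightarrow> d u w \<le> d u v + d v w"
    and "\<And>k. k \<in> C \<Longrightarrow> req k \<ge> 1"
    and "\<And>i. i \<in> F \<Longrightarrow> y i \<ge> 0"
    and "\<And>i k. i \<in> F \<Longrightarrow> k \<in> C \<Longrightarrow> x i k = 0 \<or> x i k = y i"
    and "\<And>k. k \<in> C \<Longrightarrow> is_B d y k {i \<in> F. x i k > 0} (real (req k)) (FC k)"
    and "clust_run d y C req FC n R P ctr"
    and "t < n" and "ctr t = j'"
    and "j \<in> C" and "j \<in> cluster C (R t) (P t) j'"
    and "i \<in> P t j'"
  shows "d i j \<le> 3 * radius d j (FC j)"
proof -
  have step: "clust_step d y C (\<lambda>k. radius d k (FC k)) (R t) (P t) j' (R (Suc t)) (P (Suc t))"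
    using assms(11-13) by (auto simp: clust_run_def)
  then have "j' \<in> C" by (simp add: clust_step_def)
  have FC_F: "FC k \<subseteq> F" if "k \<in> C" for k using assms(10)[OF that] by (auto simp: is_B_def)
  have P_FC: "P t k \<subseteq> FC k" for k
    using clust_run_proposition_subset[OF assms(11)] assms(12) by simp
  have P_F: "P t k \<subseteq> F" if "k \<in> C" for k using P_FC FC_F[OF that] by (rule subset_trans)
  have dist_le_radius: "d a k \<le> radius d k (FC k)" if "k \<in> C" "a \<in> P t k" for a k
    using radius_ge[OF finite_subset[OF FC_F[OF that(1)] assms(1)]] P_FC that(2) by blast
  have "i \<in> F" using P_F[OF \<open>j' \<in> C\<close>] assms(16) ..
  have "j \<notin> P t j'" using P_F[OF \<open>j' \<in> C\<close>] \<open>j \<in> C\<close> assms(3) by blast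
  with assms(15) show ?thesis
  proof (cases rule: cluster_member_cases)
    case center
    have "d i j \<ge> 0" using dist_nonneg[of "F \<union> C" d, OF assms(4-6)] \<open>i \<in> F\<close> \<open>j \<in> C\<close> by simp
    then show ?thesis using dist_le_radius[OF \<open>j' \<in> C\<close> assms(16)] center by simp
  next
    case neighbour
    then obtain a where a: "a \<in> P t j'" "a \<in> P t j" by blast
    have "a \<in> F" using P_F[OF \<open>j' \<in> C\<close>] a(1) ..
    have "radius d j' (FC j') \<le> radius d j (FC j)"
      using step neighbour \<open>j \<in> C\<close> by (simp add: clust_step_def)
    then show ?thesis
      using dist_le_via_common_point[where S = "F \<union> C" and d = d and i = i and a = a and j = j
          and j' = j' and q' = "radius d j' (FC j')" and q = "radius d j (FC j)", OF assms(5,6)]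
        dist_le_radius[OF \<open>j' \<in> C\<close> assms(16)] dist_le_radius[OF \<open>j' \<in> C\<close> a(1)]
        dist_le_radius[OF \<open>j \<in> C\<close> a(2)] \<open>i \<in> F\<close> \<open>a \<in> F\<close> \<open>j \<in> C\<close> \<open>j' \<in> C\<close>
      by simp
  qed
qed

end
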